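(* Let $G$ be a graph. (i) If some connected component of $G$ has a degree sequence of cardinality $r>2$, then $K(H(G,x))\ge 2$. (ii) For each integer $r\ge 1$ there exists a graph $G$ whose degree sequence has cardinality $r$ and with $K(H(G,x))=1$.
   Context: All graphs are finite, simple and have no isolated vertices; $d_u$ is the degree of $u$. The harmonic polynomial is $H(G,x)=\sum_{uv\in E(G)}x^{d_u+d_v-1}$. For a polynomial $p$, $K(p(x))$ is the number of its non-zero coefficients. The degree sequence of a graph is the set of distinct vertex degree values, and its cardinality is the number of distinct vertex degrees. *)

theory Defs
  imports "HOL-Computational_Algebra.Polynomial"
begin

text \<open>A finite simple graph without isolated vertices is given by its edge set;
  its vertex set is the union of the edges.\<close>

definition graph :: "'a set set \<Rightarrow> bool" where
  "graph E \<longleftrightarrow> finite E \<and> (\<forall>e\<in>E. \<exists>u v. u \<noteq> v \<and> e = {u, v})"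

definition verts :: "'a set set \<Rightarrow> 'a set" where
  "verts E = \<Union> E"

definition deg :: "'a set set \<Rightarrow> 'a \<Rightarrow> nat" where
  "deg E u = card {e \<in> E. u \<in> e}"

definition harmonic_poly :: "'a set set \<Rightarrow> nat poly" where
  "harmonic_poly E = (\<Sum>e\<in>E. monom 1 ((\<Sum>w\<in>e. deg E w) - 1))"

definition num_nonzero_coeffs :: "'b::zero poly \<Rightarrow> nat" where
  "num_nonzero_coeffs p = card {i. coeff p i \<noteq> 0}"

definition adj_rel :: "'a set set \<Rightarrow> ('a \<times> 'a) set" where
  "adj_rel E = {(u, v). {u, v} \<in> E}"

definition component :: "'a set set \<Rightarrow> 'a \<Rightarrow> 'a set" where
  "component E v = {w. (v, w) \<in> (adj_rel E)\<^sup>*}"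

definition degree_set :: "'a set set \<Rightarrow> 'a set \<Rightarrow> nat set" where
  "degree_set E S = deg E ` S"

end

theory Submission
  imports Defs "HOL-Library.Nat_Bijection"
begin

text \<open>Since every vertex of an edge has degree at least 1, the harmonic polynomial has a single
  non-zero coefficient exactly when all edges have the same degree sum \<open>s\<close>. Then along any path
  the degree alternates between \<open>d\<close> and \<open>s - d\<close>, so a component shows at most two degrees.
  Conversely, the disjoint union of the complete bipartite graphs \<open>K(a, r + 1 - a)\<close> for
  \<open>a = 1, \<dots>, r\<close> has degree sum \<open>r + 1\<close> on every edge and realises all degrees \<open>1, \<dots>, r\<close>.\<close>

definition edge_exponent :: "'a set set \<Rightarrow> 'a set \<Rightarrow> nat" where
  "edge_exponent E e = (\<Sum>w\<in>e. deg E w) - 1"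

lemma coeff_harmonic_poly:
  assumes "finite E"
  shows "coeff (harmonic_poly E) i = card {e\<in>E. edge_exponent E e = i}"
  unfolding harmonic_poly_def edge_exponent_def using assms
  by (simp add: coeff_sum coeff_monom sum.If_cases Int_def conj_commute)

lemma num_nonzero_coeffs_harmonic_poly:
  assumes "finite E"
  shows "num_nonzero_coeffs (harmonic_poly E) = card (edge_exponent E ` E)"
proof -
  have "{i. coeff (harmonic_poly E) i \<noteq> 0} = edge_exponent E ` E"
    using assms by (auto simp: coeff_harmonic_poly)
  then show ?thesis
    unfolding num_nonzero_coeffs_def by simp
qed

lemma edge_exponent_doubleton:
  "x \<noteq> y \<Longrightarrow> edge_exponent E {x, y} = deg E x + deg E y - 1"
  unfolding edge_exponent_def by simp

lemma deg_pos:
  assumes "finite E" "e \<in> E" "u \<in> e"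
  shows "deg E u > 0"
  unfolding deg_def using assms by (auto simp: card_gt_0_iff)

lemma deg_in_component_cases:
  assumes sum: "\<And>x y. {x, y} \<in> E \<Longrightarrow> deg E x + deg E y = s"
    and "w \<in> component E v"
  shows "deg E w = deg E v \<or> deg E w + deg E v = s"
proof -
  have "(v, w) \<in> (adj_rel E)\<^sup>*"
    using assms(2) unfolding component_def by simp
  then show ?thesis
  proof (induction rule: rtrancl_induct)
    case base
    then show ?case by simp
  next
    case (step y z)
    then have "deg E y + deg E z = s"
      using sum unfolding adj_rel_def by simp
    with step.IH show ?case by auto
  qed
qed

lemma card_degree_set_component_le_2:
  assumes "\<And>x y. {x, y} \<in> E \<Longrightarrow> deg E x + deg E y = s"
  shows "card (degree_set E (component E v)) \<le> 2"
proof -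
  have "degree_set E (component E v) \<subseteq> {deg E v, s - deg E v}"
    unfolding degree_set_def using deg_in_component_cases[OF assms] by fastforce
  then have "card (degree_set E (component E v)) \<le> card {deg E v, s - deg E v}"
    by (intro card_mono) auto
  also have "\<dots> \<le> 2"
    by (simp add: card_insert_le_m1)
  finally show ?thesis .
qed

lemma constant_degree_sum_if_single_exponent:
  assumes "graph E" "card (edge_exponent E ` E) \<le> 1" "e0 \<in> E" and xy: "{x, y} \<in> E"
  shows "deg E x + deg E y = edge_exponent E e0 + 1"
proof -
  have fin: "finite E"
    using assms(1) unfolding graph_def by simp
  obtain p q where "p \<noteq> q" "{x, y} = {p, q}"
    using xy assms(1) unfolding graph_def by blast
  then have "x \<noteq> y"
    by (metis doubleton_eq_iff)
  moreover have "edge_exponent E {x, y} = edge_exponent E e0"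
    using assms(2,3) fin xy card_le_Suc0_iff_eq[of "edge_exponent E ` E"]
    by (metis One_nat_def finite_imageI imageI)
  moreover have "deg E x > 0" "deg E y > 0"
    using deg_pos[OF fin xy] by auto
  ultimately show ?thesis
    using edge_exponent_doubleton[of x y E] by linarith
qed

lemma two_exponents_if_component_has_three_degrees:
  assumes "graph E" "v \<in> verts E" "card (degree_set E (component E v)) > 2"
  shows "num_nonzero_coeffs (harmonic_poly E) \<ge> 2"
proof (rule ccontr)
  assume "\<not> ?thesis"
  moreover have "finite E"
    using assms(1) unfolding graph_def by simp
  ultimately have "card (edge_exponent E ` E) \<le> 1"
    by (simp add: num_nonzero_coeffs_harmonic_poly)
  moreover obtain e0 where "e0 \<in> E"
    using assms(2) unfolding verts_def by auto
  ultimately have "card (degree_set E (component E v)) \<le> 2"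
    using card_degree_set_component_le_2 constant_degree_sum_if_single_exponent[OF assms(1)]
    by metis
  with assms(3) show False by simp
qed

text \<open>Block \<open>a\<close> of the construction is \<open>K(a, r + 1 - a)\<close>: vertex \<open>i\<close> of its left side
  (\<open>i < a\<close>) is joined to every vertex \<open>j\<close> of its right side (\<open>j < r + 1 - a\<close>).\<close>

definition block_vertex :: "nat \<Rightarrow> bool \<Rightarrow> nat \<Rightarrow> nat" where
  "block_vertex a right i = prod_encode (a, prod_encode (if right then 1 else 0, i))"

lemma block_vertex_eq_iff [simp]:
  "block_vertex a b i = block_vertex a' b' i' \<longleftrightarrow> a = a' \<and> b = b' \<and> i = i'"
  unfolding block_vertex_def by (auto simp: prod_encode_eq split: if_splits)

definition block_index :: "nat \<Rightarrow> (nat \<times> nat \<times> nat) set" where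
  "block_index r = {(a, i, j). 1 \<le> a \<and> a \<le> r \<and> i < a \<and> j < r + 1 - a}"

fun block_edge :: "nat \<times> nat \<times> nat \<Rightarrow> nat set" where
  "block_edge (a, i, j) = {block_vertex a False i, block_vertex a True j}"

definition block_graph :: "nat \<Rightarrow> nat set set" where
  "block_graph r = block_edge ` block_index r"

lemma inj_block_edge: "inj block_edge"
  unfolding inj_def by (clarsimp simp: doubleton_eq_iff)

lemma block_edge_in_block_graph_iff [simp]:
  "block_edge t \<in> block_graph r \<longleftrightarrow> t \<in> block_index r"
  unfolding block_graph_def by (simp add: inj_image_mem_iff[OF inj_block_edge])

lemma finite_block_index: "finite (block_index r)"
  by (rule finite_subset[of _ "{..r} \<times> {..r} \<times> {..r}"]) (auto simp: block_index_def)

lemma graph_block_graph: "graph (block_graph r)"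
  unfolding graph_def
proof
  show "finite (block_graph r)"
    unfolding block_graph_def using finite_block_index by simp
  show "\<forall>e\<in>block_graph r. \<exists>u v. u \<noteq> v \<and> e = {u, v}"
  proof
    fix e assume "e \<in> block_graph r"
    then obtain a i j where "e = block_edge (a, i, j)"
      unfolding block_graph_def by auto
    then show "\<exists>u v. u \<noteq> v \<and> e = {u, v}"
      by (intro exI[of _ "block_vertex a False i"] exI[of _ "block_vertex a True j"]) simp
  qed
qed

lemma deg_block_graph_left:
  assumes "(a, i, j) \<in> block_index r"
  shows "deg (block_graph r) (block_vertex a False i) = r + 1 - a"
proof -
  have "{e \<in> block_graph r. block_vertex a False i \<in> e} = (\<lambda>j. block_edge (a, i, j)) ` {..<r + 1 - a}"
    using assms by (auto simp: block_graph_def block_index_def image_iff)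
  moreover have "inj_on (\<lambda>j. block_edge (a, i, j)) {..<r + 1 - a}"
    by (simp add: inj_on_def doubleton_eq_iff)
  ultimately show ?thesis
    unfolding deg_def by (simp add: card_image)
qed

lemma deg_block_graph_right:
  assumes "(a, i, j) \<in> block_index r"
  shows "deg (block_graph r) (block_vertex a True j) = a"
proof -
  have "{e \<in> block_graph r. block_vertex a True j \<in> e} = (\<lambda>i. block_edge (a, i, j)) ` {..<a}"
    using assms by (auto simp: block_graph_def block_index_def image_iff)
  moreover have "inj_on (\<lambda>i. block_edge (a, i, j)) {..<a}"
    by (simp add: inj_on_def doubleton_eq_iff)
  ultimately show ?thesis
    unfolding deg_def by (simp add: card_image)
qed

lemma edge_exponent_block_graph:
  assumes "e \<in> block_graph r"
  shows "edge_exponent (block_graph r) e = r"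
proof -
  obtain a i j where t: "(a, i, j) \<in> block_index r" and e: "e = block_edge (a, i, j)"
    using assms unfolding block_graph_def by auto
  then have "edge_exponent (block_graph r) e = (r + 1 - a) + a - 1"
    by (simp add: edge_exponent_doubleton deg_block_graph_left deg_block_graph_right)
  also have "\<dots> = r"
    using t unfolding block_index_def by simp
  finally show ?thesis .
qed

lemma degree_set_block_graph: "degree_set (block_graph r) (verts (block_graph r)) = {1..r}"
proof
  show "degree_set (block_graph r) (verts (block_graph r)) \<subseteq> {1..r}"
  proof
    fix d assume "d \<in> degree_set (block_graph r) (verts (block_graph r))"
    then obtain x where x: "x \<in> verts (block_graph r)" and d: "d = deg (block_graph r) x"
      unfolding degree_set_def by blast
    from x obtain t where "t \<in> block_index r" and "x \<in> block_edge t"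
      unfolding verts_def block_graph_def by blast
    moreover obtain a i j where "t = (a, i, j)"
      by (rule prod_cases3)
    ultimately have t: "(a, i, j) \<in> block_index r" and "x \<in> block_edge (a, i, j)"
      by simp_all
    then have "x = block_vertex a False i \<or> x = block_vertex a True j"
      by simp
    then have "d = r + 1 - a \<or> d = a"
      using d deg_block_graph_left[OF t] deg_block_graph_right[OF t] by blast
    with t show "d \<in> {1..r}"
      unfolding block_index_def by auto
  qed
next
  show "{1..r} \<subseteq> degree_set (block_graph r) (verts (block_graph r))"
  proof
    fix d assume "d \<in> {1..r}"
    then have t: "(d, 0, 0) \<in> block_index r"
      unfolding block_index_def by auto
    then have "block_edge (d, 0, 0) \<in> block_graph r"
      by (simp only: block_edge_in_block_graph_iff)
    then have "block_vertex d True 0 \<in> verts (block_graph r)"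
      unfolding verts_def by (rule UnionI) simp
    then show "d \<in> degree_set (block_graph r) (verts (block_graph r))"
      unfolding degree_set_def using deg_block_graph_right[OF t] by (metis image_eqI)
  qed
qed

lemma num_nonzero_coeffs_harmonic_poly_block_graph:
  assumes "r \<ge> 1"
  shows "num_nonzero_coeffs (harmonic_poly (block_graph r)) = 1"
proof -
  have "(1, 0, 0) \<in> block_index r"
    using assms unfolding block_index_def by simp
  then have "block_graph r \<noteq> {}"
    using block_edge_in_block_graph_iff by blast
  moreover have "edge_exponent (block_graph r) ` block_graph r = (\<lambda>_. r) ` block_graph r"
    by (rule image_cong) (simp_all add: edge_exponent_block_graph)
  ultimately have "edge_exponent (block_graph r) ` block_graph r = {r}"
    by (simp add: image_constant_conv)
  moreover have "finite (block_graph r)"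
    using graph_block_graph unfolding graph_def by blast
  ultimately show ?thesis
    by (simp add: num_nonzero_coeffs_harmonic_poly)
qed

theorem theorem17:
  shows "(\<forall>(E :: 'a set set). graph E \<longrightarrow>
            (\<exists>v \<in> verts E. card (degree_set E (component E v)) > 2)
            \<longrightarrow> num_nonzero_coeffs (harmonic_poly E) \<ge> 2)
       \<and> (\<forall>r::nat. r \<ge> 1 \<longrightarrow> (\<exists>E :: nat set set. graph E \<and>
            card (degree_set E (verts E)) = r \<and> num_nonzero_coeffs (harmonic_poly E) = 1))"
proof (intro conjI allI impI)
  fix E :: "'a set set"
  assume "graph E" "\<exists>v \<in> verts E. card (degree_set E (component E v)) > 2"
  then show "num_nonzero_coeffs (harmonic_poly E) \<ge> 2"
    using two_exponents_if_component_has_three_degrees by meson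
next
  fix r :: nat
  assume "r \<ge> 1"
  then show "\<exists>E :: nat set set. graph E \<and>
      card (degree_set E (verts E)) = r \<and> num_nonzero_coeffs (harmonic_poly E) = 1"
    by (intro exI[of _ "block_graph r"])
      (simp add: graph_block_graph degree_set_block_graph num_nonzero_coeffs_harmonic_poly_block_graph)
qed

end
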